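(* The proof system consisting of Axiom (A) and Rules (R1)–(R6) is sound and complete for sentences: for every finite set $\Gamma$ of sentences and every sentence $\gamma$, $\Gamma\vdash\gamma$ if and only if $\Gamma\models\gamma$.
   Context: Setting (real-valued logic). Fix a finite set of atomic propositions, a finite set of binary connectives and a finite set of unary connectives. Each binary connective $\alpha$ comes with an arbitrary function $f_\alpha:[0,1]^2\to[0,1]$ and each unary connective $\rho$ with an arbitrary function $f_\rho:[0,1]\to[0,1]$. Formulas are built recursively: atomic propositions are formulas; if $\sigma_1,\sigma_2$ are formulas then so are $\sigma_1\,\alpha\,\sigma_2$ and $\rho\sigma_1$. The subformulas of $\sigma_1\,\alpha\,\sigma_2$ are $\sigma_1,\sigma_2$; the subformula of $\rho\sigma$ is $\sigma$. A model $M$ assigns a value in $[0,1]$ to each atomic proposition; values of compound formulas are computed recursively via $f_\alpha,f_\rho$. A sentence is $(\sigma_1,\ldots,\sigma_k,S)$ with $\sigma_1,\ldots,\sigma_k$ pairwise distinct formulas and $S\subseteq[0,1]^k$; $M\models(\sigma_1,\ldots,\sigma_k,S)$ iff $(s_1,\ldots,s_k)\in S$ where $s_i$ is the value of $\sigma_i$ in $M$. $\Gamma\models\gamma$ means every model of all sentences in $\Gamma$ is a model of $\gamma$. $\Gamma\vdash\gamma$ means $\gamma$ is derivable from $\Gamma$ by finitely many applications of the following axiom and rules. (A) For every formula $\sigma$: $(\sigma,[0,1])$. (R1) For a permutation $\pi$ of $\{1,\ldots,k\}$: from $(\sigma_1,\ldots,\sigma_k,S)$ infer $(\sigma_{\pi(1)},\ldots,\sigma_{\pi(k)},S')$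 with $S'=\{(s_{\pi(1)},\ldots,s_{\pi(k)}):(s_1,\ldots,s_k)\in S\}$. (R2) From $(\sigma_1,\ldots,\sigma_k,S)$ infer $(\sigma_1,\ldots,\sigma_k,\sigma_{k+1},\ldots,\sigma_m,S\times[0,1]^{m-k})$ (for formulas $\sigma_{k+1},\ldots,\sigma_m$ making all components distinct). (R3) From $(\sigma_1,\ldots,\sigma_k,S_1)$ and $(\sigma_1,\ldots,\sigma_k,S_2)$ infer $(\sigma_1,\ldots,\sigma_k,S_1\cap S_2)$. (R4) For $0<r<k$: from $(\sigma_1,\ldots,\sigma_k,S)$ infer $(\sigma_1,\ldots,\sigma_{k-r},S')$ with $S'=\{(s_1,\ldots,s_{k-r}):(s_1,\ldots,s_k)\in S\}$. (R5) From $(\sigma_1,\ldots,\sigma_k,S)$ infer $(\sigma_1,\ldots,\sigma_k,S')$ whenever $S\subseteq S'\subseteq[0,1]^k$. (R6) From $(\sigma_1,\ldots,\sigma_k,S)$ infer $(\sigma_1,\ldots,\sigma_k,S')$, where $S'$ is the set of $(s_1,\ldots,s_k)\in S$ such that (a) $f_\alpha(s_i,s_j)=s_m$ whenever $\sigma_m$ is $\sigma_i\,\alpha\,\sigma_j$ for a binary connective $\alpha$, and (b) $f_\rho(s_i)=s_j$ whenever $\sigma_j$ is $\rho\sigma_i$ for a unary connective $\rho$. *)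

theory Defs
  imports Complex_Main
begin

datatype ('a, 'b, 'u) form =
    Atom 'a
  | Bin "('a, 'b, 'u) form" 'b "('a, 'b, 'u) form"
  | UnOp 'u "('a, 'b, 'u) form"

text \<open>A sentence (sigma_1,...,sigma_k,S): the list of formulas and a set of
  real tuples, tuples being represented as lists of length k.\<close>
type_synonym ('a, 'b, 'u) sentence = "('a, 'b, 'u) form list \<times> real list set"

definition unit_cube :: "nat \<Rightarrow> real list set" where
  "unit_cube k = {s. length s = k \<and> set s \<subseteq> {0..1}}"

definition wf_sentence :: "('a, 'b, 'u) sentence \<Rightarrow> bool" where
  "wf_sentence g \<longleftrightarrow> fst g \<noteq> [] \<and> distinct (fst g) \<and> snd g \<subseteq> unit_cube (length (fst g))"

fun eval :: "('b \<Rightarrow> real \<Rightarrow> real \<Rightarrow> real) \<Rightarrow> ('u \<Rightarrow> real \<Rightarrow> real) \<Rightarrow> ('a \<Rightarrow> real)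
             \<Rightarrow> ('a, 'b, 'u) form \<Rightarrow> real" where
  "eval fb fu M (Atom p) = M p"
| "eval fb fu M (Bin s1 b s2) = fb b (eval fb fu M s1) (eval fb fu M s2)"
| "eval fb fu M (UnOp u s) = fu u (eval fb fu M s)"

definition is_model :: "('a \<Rightarrow> real) \<Rightarrow> bool" where
  "is_model M \<longleftrightarrow> (\<forall>p. M p \<in> {0..1})"

definition sat :: "('b \<Rightarrow> real \<Rightarrow> real \<Rightarrow> real) \<Rightarrow> ('u \<Rightarrow> real \<Rightarrow> real) \<Rightarrow> ('a \<Rightarrow> real)
                   \<Rightarrow> ('a, 'b, 'u) sentence \<Rightarrow> bool" where
  "sat fb fu M g \<longleftrightarrow> map (eval fb fu M) (fst g) \<in> snd g"

definition entails :: "('b \<Rightarrow> real \<Rightarrow> real \<Rightarrow> real) \<Rightarrow> ('u \<Rightarrow> real \<Rightarrow> real)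
                       \<Rightarrow> ('a, 'b, 'u) sentence set \<Rightarrow> ('a, 'b, 'u) sentence \<Rightarrow> bool" where
  "entails fb fu \<Gamma> g \<longleftrightarrow>
     (\<forall>M. is_model M \<longrightarrow> (\<forall>h\<in>\<Gamma>. sat fb fu M h) \<longrightarrow> sat fb fu M g)"

definition r6_filter :: "('b \<Rightarrow> real \<Rightarrow> real \<Rightarrow> real) \<Rightarrow> ('u \<Rightarrow> real \<Rightarrow> real)
                         \<Rightarrow> ('a, 'b, 'u) form list \<Rightarrow> real list set \<Rightarrow> real list set" where
  "r6_filter fb fu fs S = {s \<in> S.
      (\<forall>i<length fs. \<forall>j<length fs. \<forall>m<length fs. \<forall>b.
          fs ! m = Bin (fs ! i) b (fs ! j) \<longrightarrow> fb b (s ! i) (s ! j) = s ! m) \<and>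
      (\<forall>i<length fs. \<forall>j<length fs. \<forall>u.
          fs ! j = UnOp u (fs ! i) \<longrightarrow> fu u (s ! i) = s ! j)}"

inductive derivable :: "('b \<Rightarrow> real \<Rightarrow> real \<Rightarrow> real) \<Rightarrow> ('u \<Rightarrow> real \<Rightarrow> real)
                        \<Rightarrow> ('a, 'b, 'u) sentence set \<Rightarrow> ('a, 'b, 'u) sentence \<Rightarrow> bool"
  for fb fu \<Gamma> where
  hyp: "g \<in> \<Gamma> \<Longrightarrow> derivable fb fu \<Gamma> g"
| ax: "derivable fb fu \<Gamma> ([\<sigma>], unit_cube 1)"
| r1: "derivable fb fu \<Gamma> (fs, S) \<Longrightarrow> bij_betw \<pi> {..<length fs} {..<length fs} \<Longrightarrow>
       derivable fb fu \<Gamma> (map (\<lambda>i. fs ! \<pi> i) [0..<length fs],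
                             (\<lambda>s. map (\<lambda>i. s ! \<pi> i) [0..<length fs]) ` S)"
| r2: "derivable fb fu \<Gamma> (fs, S) \<Longrightarrow> distinct (fs @ gs) \<Longrightarrow>
       derivable fb fu \<Gamma> (fs @ gs, {s @ t | s t. s \<in> S \<and> t \<in> unit_cube (length gs)})"
| r3: "derivable fb fu \<Gamma> (fs, S1) \<Longrightarrow> derivable fb fu \<Gamma> (fs, S2) \<Longrightarrow>
       derivable fb fu \<Gamma> (fs, S1 \<inter> S2)"
| r4: "derivable fb fu \<Gamma> (fs, S) \<Longrightarrow> 0 < r \<Longrightarrow> r < length fs \<Longrightarrow>
       derivable fb fu \<Gamma> (take (length fs - r) fs, take (length fs - r) ` S)"
| r5: "derivable fb fu \<Gamma> (fs, S) \<Longrightarrow> S \<subseteq> S' \<Longrightarrow> S' \<subseteq> unit_cube (length fs) \<Longrightarrow>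
       derivable fb fu \<Gamma> (fs, S')"
| r6: "derivable fb fu \<Gamma> (fs, S) \<Longrightarrow> derivable fb fu \<Gamma> (fs, r6_filter fb fu fs S)"

end

theory Submission
  imports Defs
begin

text \<open>Soundness is a routine induction over derivations: every rule preserves truth in a fixed model.
  For completeness, let \<open>L\<close> list all subformulas of the formulas occurring in \<open>\<Gamma>\<close> and \<open>\<gamma>\<close>.
  Using (A), (R2), (R1) to lift each sentence to the formulas \<open>L\<close> and (R3) to intersect, one derives
  the sentence over \<open>L\<close> whose tuples are exactly the \<open>[0,1]\<close>-valuations of \<open>L\<close> satisfying \<open>\<Gamma>\<close>.
  Since \<open>L\<close> is closed under subformulas, (R6) cuts this down to the valuations respecting the
  connectives, which are precisely those induced by models; as every such model satisfies \<open>\<gamma>\<close>,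
  projecting onto the formulas of \<open>\<gamma>\<close> with (R1), (R4) and weakening with (R5) yields \<open>\<gamma>\<close>.\<close>

text \<open>A set of tuples over the formulas \<open>fs\<close> is represented as the image of a set \<open>P\<close> of
  valuations of all formulas; \<open>determined_by fs P\<close> says that \<open>P\<close> only constrains \<open>fs\<close>.\<close>

definition tuples :: "('f \<Rightarrow> real) set \<Rightarrow> 'f list \<Rightarrow> real list set" where
  "tuples P fs = (\<lambda>v. map v fs) ` P"

definition determined_by :: "'f list \<Rightarrow> ('f \<Rightarrow> real) set \<Rightarrow> bool" where
  "determined_by fs P \<longleftrightarrow> (\<forall>v w. map v fs = map w fs \<longrightarrow> v \<in> P \<longrightarrow> w \<in> P)"

definition unit_cube_vals :: "'f list \<Rightarrow> ('f \<Rightarrow> real) set" where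
  "unit_cube_vals fs = {v. \<forall>x\<in>set fs. v x \<in> {0..1}}"

lemma map_map_of_zip:
  assumes "distinct fs" "length s = length fs"
  shows "map (\<lambda>x. the (map_of (zip fs s) x)) fs = s"
  using assms by (intro nth_equalityI) (auto simp: map_of_zip_nth)

lemma tuples_preimage:
  assumes "distinct fs" "S \<subseteq> {s. length s = length fs}"
  shows "tuples {v. map v fs \<in> S} fs = S"
proof
  show "S \<subseteq> tuples {v. map v fs \<in> S} fs"
  proof
    fix s assume s: "s \<in> S"
    with assms have "map (\<lambda>x. the (map_of (zip fs s) x)) fs = s"
      by (auto intro: map_map_of_zip)
    with s show "s \<in> tuples {v. map v fs \<in> S} fs"
      unfolding tuples_def by (intro image_eqI[where x = "\<lambda>x. the (map_of (zip fs s) x)"]) auto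
  qed
qed (auto simp: tuples_def)

lemma unit_cube_vals_eq_preimage: "unit_cube_vals fs = {v. map v fs \<in> unit_cube (length fs)}"
  by (auto simp: unit_cube_vals_def unit_cube_def)

lemma determined_by_preimage:
  assumes "set fs \<subseteq> set L"
  shows "determined_by L {v. map v fs \<in> S}"
proof (unfold determined_by_def, intro allI impI)
  fix v w :: "_ \<Rightarrow> real" assume "map v L = map w L" and "v \<in> {v. map v fs \<in> S}"
  moreover from this(1) have "map v fs = map w fs" using assms by auto
  ultimately show "w \<in> {v. map v fs \<in> S}" by (simp del: map_eq_conv)
qed

lemma determined_by_Int: "determined_by L P \<Longrightarrow> determined_by L Q \<Longrightarrow> determined_by L (P \<inter> Q)"
  by (auto simp: determined_by_def)

lemma determined_by_INT: "(\<And>i. i \<in> I \<Longrightarrow> determined_by L (P i)) \<Longrightarrow> determined_by L (\<Inter>i\<in>I. P i)"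
  unfolding determined_by_def by blast

lemma tuples_Int:
  assumes Q: "determined_by fs Q"
  shows "tuples (P \<inter> Q) fs = tuples P fs \<inter> tuples Q fs"
proof
  show "tuples P fs \<inter> tuples Q fs \<subseteq> tuples (P \<inter> Q) fs"
  proof
    fix x assume "x \<in> tuples P fs \<inter> tuples Q fs"
    then obtain v w where v: "x = map v fs" "v \<in> P" and w: "x = map w fs" "w \<in> Q"
      unfolding tuples_def by blast
    have "map w fs = map v fs" using v(1) w(1) by (simp del: map_eq_conv)
    with Q w(2) have "v \<in> Q" unfolding determined_by_def by blast
    thus "x \<in> tuples (P \<inter> Q) fs" using v unfolding tuples_def by blast
  qed
qed (auto simp: tuples_def)

lemma tuples_take: "take (length fs) ` tuples P (fs @ gs) = tuples P fs"
  unfolding tuples_def by (auto simp: image_image)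

lemma tuples_permute:
  assumes "\<And>i. i < length fs \<Longrightarrow> \<pi> i < length fs"
  shows "(\<lambda>s. map (\<lambda>i. s ! \<pi> i) [0..<length fs]) ` tuples P fs
         = tuples P (map (\<lambda>i. fs ! \<pi> i) [0..<length fs])"
proof -
  have "map (\<lambda>i. map v fs ! \<pi> i) [0..<length fs] = map v (map (\<lambda>i. fs ! \<pi> i) [0..<length fs])"
    for v :: "_ \<Rightarrow> real"
    using assms by (intro nth_equalityI) auto
  thus ?thesis unfolding tuples_def image_image by (simp only:)
qed

text \<open>A valuation in \<open>P\<close> may be overwritten on the new formulas \<open>gs\<close> and stays in \<open>P\<close>,
  because \<open>P\<close> only constrains \<open>fs\<close>.\<close>
lemma tuples_append:
  assumes dis: "distinct (fs @ gs)" and P: "determined_by fs P"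
  shows "{s @ t | s t. s \<in> tuples P fs \<and> t \<in> unit_cube (length gs)}
         = tuples (P \<inter> unit_cube_vals gs) (fs @ gs)"
proof
  show "{s @ t | s t. s \<in> tuples P fs \<and> t \<in> unit_cube (length gs)}
        \<subseteq> tuples (P \<inter> unit_cube_vals gs) (fs @ gs)"
  proof
    fix x assume "x \<in> {s @ t | s t. s \<in> tuples P fs \<and> t \<in> unit_cube (length gs)}"
    then obtain w t where x: "x = map w fs @ t" and w: "w \<in> P" and t: "t \<in> unit_cube (length gs)"
      by (auto simp: tuples_def)
    define v where "v y = (if y \<in> set gs then the (map_of (zip gs t) y) else w y)" for y
    have fs: "map v fs = map w fs" using dis by (auto simp: v_def)
    have "map v gs = map (\<lambda>y. the (map_of (zip gs t) y)) gs" by (simp add: v_def)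
    also have "\<dots> = t" using t dis by (intro map_map_of_zip) (auto simp: unit_cube_def)
    finally have gs: "map v gs = t" .
    have "v \<in> P" using P fs[symmetric] w unfolding determined_by_def by blast
    moreover have "v \<in> unit_cube_vals gs" using t gs by (simp add: unit_cube_vals_eq_preimage)
    ultimately show "x \<in> tuples (P \<inter> unit_cube_vals gs) (fs @ gs)"
      unfolding tuples_def x using fs gs by (intro image_eqI[where x = v]) auto
  qed
  show "tuples (P \<inter> unit_cube_vals gs) (fs @ gs)
        \<subseteq> {s @ t | s t. s \<in> tuples P fs \<and> t \<in> unit_cube (length gs)}"
  proof
    fix x assume "x \<in> tuples (P \<inter> unit_cube_vals gs) (fs @ gs)"
    then obtain v where x: "x = map v fs @ map v gs" and "v \<in> P" "v \<in> unit_cube_vals gs"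
      unfolding tuples_def by auto
    hence "map v fs \<in> tuples P fs" "map v gs \<in> unit_cube (length gs)"
      by (auto simp: tuples_def unit_cube_vals_eq_preimage)
    thus "x \<in> {s @ t | s t. s \<in> tuples P fs \<and> t \<in> unit_cube (length gs)}"
      using x by blast
  qed
qed

fun subformulas :: "('a, 'b, 'u) form \<Rightarrow> ('a, 'b, 'u) form set" where
  "subformulas (Atom p) = {Atom p}"
| "subformulas (Bin a b c) = insert (Bin a b c) (subformulas a \<union> subformulas c)"
| "subformulas (UnOp u a) = insert (UnOp u a) (subformulas a)"

lemma finite_subformulas: "finite (subformulas x)"
  by (induction x) auto

lemma subformulas_self: "x \<in> subformulas x"
  by (cases x) auto

lemma subformulas_trans: "y \<in> subformulas x \<Longrightarrow> subformulas y \<subseteq> subformulas x"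
  by (induction x) auto

definition subformula_closed :: "('a, 'b, 'u) form set \<Rightarrow> bool" where
  "subformula_closed F \<longleftrightarrow>
     (\<forall>a b c. Bin a b c \<in> F \<longrightarrow> a \<in> F \<and> c \<in> F) \<and> (\<forall>u a. UnOp u a \<in> F \<longrightarrow> a \<in> F)"

lemma subformula_closed_subformulas: "subformula_closed (subformulas x)"
  unfolding subformula_closed_def
proof (intro conjI allI impI)
  fix a b c assume "Bin a b c \<in> subformulas x"
  hence "subformulas (Bin a b c) \<subseteq> subformulas x" by (rule subformulas_trans)
  thus "a \<in> subformulas x" "c \<in> subformulas x" using subformulas_self[of a] subformulas_self[of c] by auto
next
  fix u a assume "UnOp u a \<in> subformulas x"
  hence "subformulas (UnOp u a) \<subseteq> subformulas x" by (rule subformulas_trans)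
  thus "a \<in> subformulas x" using subformulas_self[of a] by auto
qed

lemma subformula_closed_UN:
  assumes "\<And>x. x \<in> A \<Longrightarrow> subformula_closed (F x)"
  shows "subformula_closed (\<Union>x\<in>A. F x)"
proof (unfold subformula_closed_def, intro conjI allI impI)
  fix a b c assume "Bin a b c \<in> (\<Union>x\<in>A. F x)"
  then obtain x where x: "x \<in> A" and "Bin a b c \<in> F x" by blast
  moreover have "subformula_closed (F x)" using assms x .
  ultimately have "a \<in> F x" "c \<in> F x" unfolding subformula_closed_def by blast+
  with x show "a \<in> (\<Union>x\<in>A. F x)" "c \<in> (\<Union>x\<in>A. F x)" by blast+
next
  fix u a assume "UnOp u a \<in> (\<Union>x\<in>A. F x)"
  then obtain x where x: "x \<in> A" and "UnOp u a \<in> F x" by blast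
  moreover have "subformula_closed (F x)" using assms x .
  ultimately have "a \<in> F x" unfolding subformula_closed_def by blast
  with x show "a \<in> (\<Union>x\<in>A. F x)" by blast
qed

definition respecting :: "('b \<Rightarrow> real \<Rightarrow> real \<Rightarrow> real) \<Rightarrow> ('u \<Rightarrow> real \<Rightarrow> real)
                          \<Rightarrow> ('a, 'b, 'u) form set \<Rightarrow> (('a, 'b, 'u) form \<Rightarrow> real) set" where
  "respecting fb fu F = {v. (\<forall>a b c. Bin a b c \<in> F \<longrightarrow> v (Bin a b c) = fb b (v a) (v c)) \<and>
                            (\<forall>u a. UnOp u a \<in> F \<longrightarrow> v (UnOp u a) = fu u (v a))}"

lemma r6_filter_map_iff:
  assumes "subformula_closed (set L)"
  shows "map v L \<in> r6_filter fb fu L S \<longleftrightarrow> map v L \<in> S \<and> v \<in> respecting fb fu (set L)"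
proof -
  have bin: "(\<forall>x\<in>set L. \<forall>y\<in>set L. \<forall>z\<in>set L. \<forall>b. z = Bin x b y \<longrightarrow> fb b (v x) (v y) = v z)
      \<longleftrightarrow> (\<forall>a b c. Bin a b c \<in> set L \<longrightarrow> v (Bin a b c) = fb b (v a) (v c))"
    using assms unfolding subformula_closed_def by metis
  have un: "(\<forall>x\<in>set L. \<forall>z\<in>set L. \<forall>u. z = UnOp u x \<longrightarrow> fu u (v x) = v z)
      \<longleftrightarrow> (\<forall>u a. UnOp u a \<in> set L \<longrightarrow> v (UnOp u a) = fu u (v a))"
    using assms unfolding subformula_closed_def by metis
  have "map v L \<in> r6_filter fb fu L S \<longleftrightarrow> map v L \<in> S \<and>
      (\<forall>x\<in>set L. \<forall>y\<in>set L. \<forall>z\<in>set L. \<forall>b. z = Bin x b y \<longrightarrow> fb b (v x) (v y) = v z) \<and>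
      (\<forall>x\<in>set L. \<forall>z\<in>set L. \<forall>u. z = UnOp u x \<longrightarrow> fu u (v x) = v z)"
    by (simp add: r6_filter_def all_set_conv_all_nth)
  thus ?thesis by (simp only: bin un respecting_def mem_Collect_eq)
qed

lemma r6_filter_tuples:
  assumes "subformula_closed (set L)"
  shows "r6_filter fb fu L (tuples P L) = tuples (P \<inter> respecting fb fu (set L)) L"
proof
  show "r6_filter fb fu L (tuples P L) \<subseteq> tuples (P \<inter> respecting fb fu (set L)) L"
  proof
    fix s assume s: "s \<in> r6_filter fb fu L (tuples P L)"
    then obtain v where v: "s = map v L" "v \<in> P" unfolding r6_filter_def tuples_def by blast
    with s have "v \<in> respecting fb fu (set L)" using r6_filter_map_iff[OF assms] by simp
    with v show "s \<in> tuples (P \<inter> respecting fb fu (set L)) L" unfolding tuples_def by blast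
  qed
  show "tuples (P \<inter> respecting fb fu (set L)) L \<subseteq> r6_filter fb fu L (tuples P L)"
    unfolding tuples_def using r6_filter_map_iff[OF assms] by auto
qed

definition atom_model :: "('a, 'b, 'u) form set \<Rightarrow> (('a, 'b, 'u) form \<Rightarrow> real) \<Rightarrow> 'a \<Rightarrow> real" where
  "atom_model F v p = (if Atom p \<in> F then v (Atom p) else 0)"

lemma is_model_atom_model: "v \<in> unit_cube_vals L \<Longrightarrow> is_model (atom_model (set L) v)"
  by (auto simp: is_model_def atom_model_def unit_cube_vals_def)

lemma eval_atom_model:
  assumes closed: "subformula_closed F" and v: "v \<in> respecting fb fu F"
  shows "x \<in> F \<Longrightarrow> eval fb fu (atom_model F v) x = v x"
proof (induction x)
  case (Atom p)
  thus ?case by (simp add: atom_model_def)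
next
  case (Bin a b c)
  with closed have "a \<in> F" "c \<in> F" unfolding subformula_closed_def by blast+
  with Bin v show ?case unfolding respecting_def by simp
next
  case (UnOp u a)
  with closed have "a \<in> F" unfolding subformula_closed_def by blast
  with UnOp v show ?case unfolding respecting_def by simp
qed

definition sat_vals :: "('a, 'b, 'u) sentence set \<Rightarrow> (('a, 'b, 'u) form \<Rightarrow> real) set" where
  "sat_vals G = (\<Inter>h\<in>G. {v. map v (fst h) \<in> snd h})"

lemma determined_by_sat_vals:
  "(\<And>h. h \<in> G \<Longrightarrow> set (fst h) \<subseteq> set L) \<Longrightarrow> determined_by L (sat_vals G)"
  unfolding sat_vals_def by (intro determined_by_INT determined_by_preimage)

lemma determined_by_unit_cube_vals: "determined_by L (unit_cube_vals L)"
  unfolding unit_cube_vals_eq_preimage by (intro determined_by_preimage) simp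

text \<open>Each such valuation is induced by the model \<open>atom_model (set L) v\<close>.\<close>
lemma tuples_subset_if_entails:
  assumes ent: "entails fb fu \<Gamma> \<gamma>" and closed: "subformula_closed (set L)"
    and sub: "\<And>g. g \<in> insert \<gamma> \<Gamma> \<Longrightarrow> set (fst g) \<subseteq> set L"
  shows "tuples (sat_vals \<Gamma> \<inter> unit_cube_vals L \<inter> respecting fb fu (set L)) (fst \<gamma>) \<subseteq> snd \<gamma>"
proof
  fix s assume "s \<in> tuples (sat_vals \<Gamma> \<inter> unit_cube_vals L \<inter> respecting fb fu (set L)) (fst \<gamma>)"
  then obtain v where s: "s = map v (fst \<gamma>)" and v: "v \<in> sat_vals \<Gamma>" "v \<in> unit_cube_vals L"
    "v \<in> respecting fb fu (set L)"
    unfolding tuples_def by blast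
  define M where "M = atom_model (set L) v"
  have agree: "map (eval fb fu M) (fst g) = map v (fst g)" if "g \<in> insert \<gamma> \<Gamma>" for g
    using sub[OF that] eval_atom_model[OF closed v(3)] unfolding M_def by auto
  have "sat fb fu M h" if "h \<in> \<Gamma>" for h
  proof -
    have "map (eval fb fu M) (fst h) = map v (fst h)" using agree that by blast
    also have "\<dots> \<in> snd h" using v(1) that unfolding sat_vals_def by blast
    finally show ?thesis unfolding sat_def .
  qed
  with ent have "sat fb fu M \<gamma>"
    using is_model_atom_model[OF v(2)] unfolding entails_def M_def by blast
  moreover have "s = map (eval fb fu M) (fst \<gamma>)" using s agree[OF insertI1] by (simp only:)
  ultimately show "s \<in> snd \<gamma>" unfolding sat_def by simp
qed

lemma eval_in_unit_interval:
  assumes "\<And>b x y. x \<in> {0..1} \<Longrightarrow> y \<in> {0..1} \<Longrightarrow> fb b x y \<in> {0..1}"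
    and "\<And>u x. x \<in> {0..1} \<Longrightarrow> fu u x \<in> {0..1}" and "is_model M"
  shows "eval fb fu M x \<in> {0..1}"
proof (induction x)
  case (Atom p)
  from \<open>is_model M\<close> show ?case by (simp add: is_model_def)
next
  case (Bin a b c)
  then show ?case by (simp only: eval.simps assms(1))
next
  case (UnOp u a)
  then show ?case by (simp only: eval.simps assms(2))
qed

lemma derivable_sound:
  assumes "derivable fb fu \<Gamma> g"
    and "\<And>b x y. x \<in> {0..1} \<Longrightarrow> y \<in> {0..1} \<Longrightarrow> fb b x y \<in> {0..1}"
    and "\<And>u x. x \<in> {0..1} \<Longrightarrow> fu u x \<in> {0..1}"
    and "is_model M" and \<Gamma>: "\<forall>h\<in>\<Gamma>. sat fb fu M h"
  shows "sat fb fu M g"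
proof -
  have range: "eval fb fu M x \<in> {0..1}" for x
    using eval_in_unit_interval[OF assms(2-4)] .
  from assms(1) show ?thesis
  proof (induction rule: derivable.induct)
    case (hyp g)
    with \<Gamma> show ?case by blast
  next
    case (ax \<sigma>)
    show ?case using range[of \<sigma>] by (simp add: sat_def unit_cube_def)
  next
    case (r1 fs S \<pi>)
    have "\<pi> i < length fs" if "i < length fs" for i using r1.hyps(2) that by (auto simp: bij_betw_def)
    hence "map (eval fb fu M) (map (\<lambda>i. fs ! \<pi> i) [0..<length fs])
           = map (\<lambda>i. map (eval fb fu M) fs ! \<pi> i) [0..<length fs]"
      by (intro nth_equalityI) auto
    with r1.IH show ?case unfolding sat_def by auto
  next
    case (r2 fs S gs)
    have "map (eval fb fu M) gs \<in> unit_cube (length gs)"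
      using range by (auto simp: unit_cube_def)
    with r2.IH show ?case unfolding sat_def by auto
  next
    case (r4 fs S r)
    hence "take (length fs - r) (map (eval fb fu M) fs) \<in> take (length fs - r) ` S"
      unfolding sat_def by simp
    thus ?case unfolding sat_def by (simp add: take_map)
  next
    case (r6 fs S)
    thus ?case by (simp add: sat_def r6_filter_def)
  qed (auto simp: sat_def)
qed

context
  fixes fb :: "'b \<Rightarrow> real \<Rightarrow> real \<Rightarrow> real" and fu :: "'u \<Rightarrow> real \<Rightarrow> real"
    and \<Gamma> :: "('a, 'b, 'u) sentence set"
begin

lemma derivable_reorder:
  assumes d: "derivable fb fu \<Gamma> (fs, tuples P fs)"
    and fs: "distinct fs" and ys: "distinct ys" and set_eq: "set ys = set fs"
  shows "derivable fb fu \<Gamma> (ys, tuples P ys)"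
proof -
  let ?n = "length fs"
  have len: "length ys = ?n" using fs ys set_eq by (metis distinct_card)
  have bij_fs: "bij_betw ((!) fs) {..<?n} (set fs)" by (rule bij_betw_nth[OF fs]) auto
  have bij_ys: "bij_betw ((!) ys) {..<?n} (set fs)" by (rule bij_betw_nth[OF ys]) (auto simp: len set_eq)
  define \<pi> where "\<pi> = inv_into {..<?n} ((!) fs) \<circ> (!) ys"
  have \<pi>: "bij_betw \<pi> {..<?n} {..<?n}"
    unfolding \<pi>_def using bij_betw_trans[OF bij_ys bij_betw_inv_into[OF bij_fs]] .
  have "fs ! \<pi> i = ys ! i" if "i < ?n" for i
  proof -
    have "ys ! i \<in> set fs" using that len set_eq by (metis nth_mem)
    hence "ys ! i \<in> (!) fs ` {..<?n}" using bij_fs by (simp add: bij_betw_def)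
    thus ?thesis by (simp add: \<pi>_def f_inv_into_f)
  qed
  hence ys_eq: "map (\<lambda>i. fs ! \<pi> i) [0..<?n] = ys" by (intro nth_equalityI) (auto simp: len)
  have "\<pi> i < ?n" if "i < ?n" for i using \<pi> that by (auto simp: bij_betw_def)
  with derivable.r1[OF d \<pi>] show ?thesis by (simp add: tuples_permute ys_eq)
qed

lemma derivable_append:
  assumes "derivable fb fu \<Gamma> (fs, tuples P fs)" "distinct (fs @ gs)" "determined_by fs P"
  shows "derivable fb fu \<Gamma> (fs @ gs, tuples (P \<inter> unit_cube_vals gs) (fs @ gs))"
  using derivable.r2[OF assms(1,2)] unfolding tuples_append[OF assms(2,3)] .

lemma derivable_take:
  assumes d: "derivable fb fu \<Gamma> (fs @ gs, tuples P (fs @ gs))" and "fs \<noteq> []"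
  shows "derivable fb fu \<Gamma> (fs, tuples P fs)"
proof (cases "gs = []")
  case False
  with \<open>fs \<noteq> []\<close> have "0 < length gs" "length gs < length (fs @ gs)" by auto
  from derivable.r4[OF d this] show ?thesis by (simp add: tuples_take)
qed (use d in simp)

lemma derivable_Int:
  assumes "derivable fb fu \<Gamma> (fs, tuples P fs)" "derivable fb fu \<Gamma> (fs, tuples Q fs)"
    and "determined_by fs Q"
  shows "derivable fb fu \<Gamma> (fs, tuples (P \<inter> Q) fs)"
  using derivable.r3[OF assms(1,2)] unfolding tuples_Int[OF assms(3)] .

lemma derivable_respecting:
  assumes "derivable fb fu \<Gamma> (L, tuples P L)" "subformula_closed (set L)"
  shows "derivable fb fu \<Gamma> (L, tuples (P \<inter> respecting fb fu (set L)) L)"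
  using derivable.r6[OF assms(1)] unfolding r6_filter_tuples[OF assms(2)] .

lemma derivable_sublist:
  assumes d: "derivable fb fu \<Gamma> (L, tuples P L)" and L: "distinct L"
    and fs: "distinct fs" "fs \<noteq> []" "set fs \<subseteq> set L"
  shows "derivable fb fu \<Gamma> (fs, tuples P fs)"
proof -
  define rs where "rs = filter (\<lambda>x. x \<notin> set fs) L"
  have "distinct (fs @ rs)" "set (fs @ rs) = set L" using L fs by (auto simp: rs_def)
  from derivable_reorder[OF d L this] show ?thesis using derivable_take fs(2) by blast
qed

lemma derivable_lift:
  assumes d: "derivable fb fu \<Gamma> (fs, S)" and fs: "distinct fs" "S \<subseteq> unit_cube (length fs)"
    and L: "distinct L" "set fs \<subseteq> set L"
  shows "derivable fb fu \<Gamma> (L, tuples ({v. map v fs \<in> S} \<inter> unit_cube_vals L) L)"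
proof -
  let ?P = "{v. map v fs \<in> S}"
  define rs where "rs = filter (\<lambda>x. x \<notin> set fs) L"
  have dis: "distinct (fs @ rs)" and set_eq: "set (fs @ rs) = set L" using L fs by (auto simp: rs_def)
  have "S = tuples ?P fs" using fs by (intro tuples_preimage[symmetric]) (auto simp: unit_cube_def)
  with d have "derivable fb fu \<Gamma> (fs, tuples ?P fs)" by simp
  from derivable_append[OF this dis determined_by_preimage]
  have "derivable fb fu \<Gamma> (fs @ rs, tuples (?P \<inter> unit_cube_vals rs) (fs @ rs))" by simp
  from derivable_reorder[OF this dis L(1) set_eq[symmetric]]
  have "derivable fb fu \<Gamma> (L, tuples (?P \<inter> unit_cube_vals rs) L)" .
  moreover have "?P \<inter> unit_cube_vals rs = ?P \<inter> unit_cube_vals L"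
  proof -
    have "?P \<subseteq> unit_cube_vals fs" using fs(2) by (auto simp: unit_cube_vals_eq_preimage)
    moreover have "unit_cube_vals L = unit_cube_vals fs \<inter> unit_cube_vals rs"
      using set_eq by (auto simp: unit_cube_vals_def)
    ultimately show ?thesis by blast
  qed
  ultimately show ?thesis by simp
qed

lemma derivable_sat_vals:
  assumes "finite G" "G \<subseteq> \<Gamma>" and wf: "\<forall>g\<in>\<Gamma>. wf_sentence g"
    and L: "distinct L" "L \<noteq> []" and sub: "\<And>g. g \<in> \<Gamma> \<Longrightarrow> set (fst g) \<subseteq> set L"
  shows "derivable fb fu \<Gamma> (L, tuples (sat_vals G \<inter> unit_cube_vals L) L)"
  using assms(1,2)
proof (induction G rule: finite_induct)
  case empty
  from L(2) obtain \<sigma> where \<sigma>: "\<sigma> \<in> set L" using last_in_set by blast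
  have "derivable fb fu \<Gamma> (L, tuples ({v. map v [\<sigma>] \<in> unit_cube 1} \<inter> unit_cube_vals L) L)"
    using derivable_lift[OF derivable.ax _ _ L(1)] \<sigma> by simp
  moreover have "{v. map v [\<sigma>] \<in> unit_cube 1} \<inter> unit_cube_vals L = sat_vals {} \<inter> unit_cube_vals L"
    using \<sigma> by (auto simp: sat_vals_def unit_cube_vals_def unit_cube_def)
  ultimately show ?case by simp
next
  case (insert g G)
  hence g: "g \<in> \<Gamma>" and G: "G \<subseteq> \<Gamma>" by auto
  with wf have "distinct (fst g)" "snd g \<subseteq> unit_cube (length (fst g))"
    by (auto simp: wf_sentence_def)
  moreover have "derivable fb fu \<Gamma> (fst g, snd g)" using derivable.hyp[OF g] by simp
  ultimately have "derivable fb fu \<Gamma> (L, tuples ({v. map v (fst g) \<in> snd g} \<inter> unit_cube_vals L) L)"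
    using derivable_lift L(1) sub[OF g] by blast
  moreover note insert.IH[OF G]
  moreover have "determined_by L (sat_vals G \<inter> unit_cube_vals L)"
    using sub G by (intro determined_by_Int determined_by_sat_vals determined_by_unit_cube_vals) auto
  ultimately have "derivable fb fu \<Gamma>
      (L, tuples ({v. map v (fst g) \<in> snd g} \<inter> unit_cube_vals L \<inter> (sat_vals G \<inter> unit_cube_vals L)) L)"
    by (rule derivable_Int)
  moreover have "{v. map v (fst g) \<in> snd g} \<inter> unit_cube_vals L \<inter> (sat_vals G \<inter> unit_cube_vals L)
      = sat_vals (insert g G) \<inter> unit_cube_vals L"
    by (auto simp: sat_vals_def)
  ultimately show ?case by simp
qed

lemma derivable_complete:
  assumes fin: "finite \<Gamma>" and wf: "\<forall>g\<in>\<Gamma>. wf_sentence g" "wf_sentence \<gamma>"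
    and ent: "entails fb fu \<Gamma> \<gamma>"
  shows "derivable fb fu \<Gamma> \<gamma>"
proof -
  have "finite (\<Union>g\<in>insert \<gamma> \<Gamma>. \<Union>x\<in>set (fst g). subformulas x)"
    using fin by (intro finite_UN_I) (simp_all add: finite_subformulas)
  from finite_distinct_list[OF this] obtain L
    where L: "set L = (\<Union>g\<in>insert \<gamma> \<Gamma>. \<Union>x\<in>set (fst g). subformulas x)" "distinct L"
    by blast
  have closed: "subformula_closed (set L)"
    unfolding L(1) by (intro subformula_closed_UN subformula_closed_subformulas)
  have sub: "set (fst g) \<subseteq> set L" if "g \<in> insert \<gamma> \<Gamma>" for g
  proof
    fix x assume "x \<in> set (fst g)"
    with that show "x \<in> set L" unfolding L(1) using subformulas_self[of x] by blast
  qed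
  from wf(2) have \<gamma>: "fst \<gamma> \<noteq> []" "distinct (fst \<gamma>)" "snd \<gamma> \<subseteq> unit_cube (length (fst \<gamma>))"
    by (auto simp: wf_sentence_def)
  with sub[OF insertI1] have "L \<noteq> []" by auto
  let ?V = "sat_vals \<Gamma> \<inter> unit_cube_vals L \<inter> respecting fb fu (set L)"
  have "derivable fb fu \<Gamma> (L, tuples ?V L)"
    using derivable_sat_vals[OF fin order_refl wf(1) L(2) \<open>L \<noteq> []\<close> sub[OF insertI2]] closed
    by (rule derivable_respecting)
  hence "derivable fb fu \<Gamma> (fst \<gamma>, tuples ?V (fst \<gamma>))"
    using L(2) \<gamma>(2,1) sub[OF insertI1] by (rule derivable_sublist)
  moreover have "tuples ?V (fst \<gamma>) \<subseteq> snd \<gamma>"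
    using ent closed sub by (rule tuples_subset_if_entails)
  ultimately have "derivable fb fu \<Gamma> (fst \<gamma>, snd \<gamma>)"
    using \<gamma>(3) by (rule derivable.r5)
  thus ?thesis by simp
qed

end

theorem theorem2:
  fixes fb :: "'b::finite \<Rightarrow> real \<Rightarrow> real \<Rightarrow> real"
    and fu :: "'u::finite \<Rightarrow> real \<Rightarrow> real"
    and \<Gamma> :: "('a::finite, 'b, 'u) sentence set"
    and \<gamma> :: "('a, 'b, 'u) sentence"
  assumes "\<And>b x y. x \<in> {0..1} \<Longrightarrow> y \<in> {0..1} \<Longrightarrow> fb b x y \<in> {0..1}"
    and "\<And>u x. x \<in> {0..1} \<Longrightarrow> fu u x \<in> {0..1}"
    and "finite \<Gamma>"
    and "\<forall>g\<in>\<Gamma>. wf_sentence g"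
    and "wf_sentence \<gamma>"
  shows "derivable fb fu \<Gamma> \<gamma> \<longleftrightarrow> entails fb fu \<Gamma> \<gamma>"
proof
  assume "derivable fb fu \<Gamma> \<gamma>"
  from derivable_sound[OF this assms(1,2)] show "entails fb fu \<Gamma> \<gamma>"
    unfolding entails_def by blast
next
  assume "entails fb fu \<Gamma> \<gamma>"
  with assms(3-5) show "derivable fb fu \<Gamma> \<gamma>" by (rule derivable_complete)
qed

end
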